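(* For all $n\ge 4$, there is no perfect lattice code in $\mathcal{A}(n,n-2,1)$.
   Context: For integers $n\ge 1$, $0\le t\le n$, $\ell\ge 1$, let $\mathcal{S}(n,t,\ell)=\{\mathcal{E}\in\mathbb{Z}^n: 0\le\varepsilon_i\le\ell \text{ for all } i,\ w_H(\mathcal{E})\le t\}$, where $w_H$ is the number of nonzero coordinates. A lattice here is the set of integer combinations of $n$ linearly independent vectors of $\mathbb{Z}^n$. $\mathcal{A}(n,t,\ell)$ is the set of lattices $\mathcal{L}\subseteq\mathbb{Z}^n$ such that the translates $X+\mathcal{S}(n,t,\ell)$, $X\in\mathcal{L}$, are pairwise disjoint. Such $\mathcal{L}$ is perfect if these translates also cover $\mathbb{Z}^n$. *)

theory Defs
  imports "HOL-Analysis.Analysis"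
begin

text \<open>Vectors of Z^n are modelled as functions nat => int vanishing outside {0..<n}.\<close>

definition zvec :: "nat \<Rightarrow> (nat \<Rightarrow> int) set" where
  "zvec n = {x. \<forall>i\<ge>n. x i = 0}"

definition hamming_weight :: "nat \<Rightarrow> (nat \<Rightarrow> int) \<Rightarrow> nat" where
  "hamming_weight n x = card {i. i < n \<and> x i \<noteq> 0}"

definition errS :: "nat \<Rightarrow> nat \<Rightarrow> nat \<Rightarrow> (nat \<Rightarrow> int) set" where
  "errS n t l = {e \<in> zvec n. (\<forall>i<n. 0 \<le> e i \<and> e i \<le> int l) \<and> hamming_weight n e \<le> t}"

definition is_lattice :: "nat \<Rightarrow> (nat \<Rightarrow> int) set \<Rightarrow> bool" where
  "is_lattice n L \<longleftrightarrow> (\<exists>b :: nat \<Rightarrow> nat \<Rightarrow> int.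
      (\<forall>j<n. b j \<in> zvec n) \<and>
      (\<forall>c :: nat \<Rightarrow> real. (\<forall>i<n. (\<Sum>j<n. c j * of_int (b j i)) = 0) \<longrightarrow> (\<forall>j<n. c j = 0)) \<and>
      L = {(\<lambda>i. \<Sum>j<n. c j * b j i) | c :: nat \<Rightarrow> int. True})"

definition translate :: "(nat \<Rightarrow> int) \<Rightarrow> (nat \<Rightarrow> int) set \<Rightarrow> (nat \<Rightarrow> int) set" where
  "translate X S = {(\<lambda>i. X i + e i) | e. e \<in> S}"

definition latA :: "nat \<Rightarrow> nat \<Rightarrow> nat \<Rightarrow> (nat \<Rightarrow> int) set set" where
  "latA n t l = {L. is_lattice n L \<and>
     (\<forall>X\<in>L. \<forall>Y\<in>L. X \<noteq> Y \<longrightarrow> translate X (errS n t l) \<inter> translate Y (errS n t l) = {})}"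

definition perfect :: "nat \<Rightarrow> nat \<Rightarrow> nat \<Rightarrow> (nat \<Rightarrow> int) set \<Rightarrow> bool" where
  "perfect n t l L \<longleftrightarrow> (\<Union>X\<in>L. translate X (errS n t l)) = zvec n"

end

theory Submission
  imports Defs "HOL-Library.Function_Algebras"
begin

text \<open>
  If a nonzero lattice point \<open>X\<close> with entries in \<open>{-1, 0, 1}\<close> had at least two entries
  \<open>\<le> 0\<close> and at least two entries \<open>\<ge> 0\<close>, then both its positive part \<open>X\<^sup>+\<close> and its
  negative part \<open>X\<^sup>-\<close> would be error vectors, and \<open>X + X\<^sup>- = 0 + X\<^sup>+\<close> would lie in the
  translates of both \<open>X\<close> and \<open>0\<close>. Covering \<open>\<one>\<close> and \<open>\<one> - e\<^sub>k\<close> under this constraint shows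
  that \<open>\<one>\<close> or some \<open>\<one> - e\<^sub>i\<close> lies in the lattice, and that for every \<open>k\<close> either
  \<open>\<one> - e\<^sub>k\<close> or \<open>\<one> - 2 e\<^sub>k\<close> does. If \<open>\<one>\<close> is a lattice point, this leaves
  \<open>\<one> - 2 e\<^sub>0 - 2 e\<^sub>1\<close> in the lattice; if \<open>\<one> - e\<^sub>i\<close> is one, covering \<open>\<one> - 2 e\<^sub>i\<close> by an
  error \<open>e\<close> produces the lattice point \<open>\<one> - e\<^sub>i - 2 e\<^sub>k - e\<close> for any \<open>k \<noteq> i\<close> with
  \<open>e k = 0\<close>. For \<open>n \<ge> 4\<close> both are forbidden ternary vectors.
\<close>

lemma lattice_points:
  assumes "is_lattice n L"
  obtains b where "\<forall>j<n. b j \<in> zvec n" "L = {(\<lambda>i. \<Sum>j<n. c j * b j i) | c :: nat \<Rightarrow> int. True}"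
  using assms unfolding is_lattice_def by blast

lemma lattice_subset_zvec:
  assumes "is_lattice n L"
  shows "L \<subseteq> zvec n"
proof
  fix X assume "X \<in> L"
  obtain b where "\<forall>j<n. b j \<in> zvec n" "L = {(\<lambda>i. \<Sum>j<n. c j * b j i) | c :: nat \<Rightarrow> int. True}"
    using assms by (rule lattice_points)
  with \<open>X \<in> L\<close> show "X \<in> zvec n" by (auto simp: zvec_def)
qed

lemma lattice_diff_mem:
  assumes "is_lattice n L" "X \<in> L" "Y \<in> L"
  shows "X - Y \<in> L"
proof -
  obtain b where L: "L = {(\<lambda>i. \<Sum>j<n. c j * b j i) | c :: nat \<Rightarrow> int. True}"
    using assms(1) by (rule lattice_points)
  from assms(2,3) obtain c d where "X = (\<lambda>i. \<Sum>j<n. c j * b j i)" "Y = (\<lambda>i. \<Sum>j<n. d j * b j i)"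
    unfolding L by blast
  then have "X - Y = (\<lambda>i. \<Sum>j<n. (c j - d j) * b j i)"
    by (simp add: fun_eq_iff sum_subtractf[symmetric] algebra_simps)
  then show ?thesis unfolding L by (intro CollectI exI[of _ "\<lambda>j. c j - d j"]) simp
qed

lemma lattice_zero_mem:
  assumes "is_lattice n L"
  shows "0 \<in> L"
proof -
  obtain b where L: "L = {(\<lambda>i. \<Sum>j<n. c j * b j i) | c :: nat \<Rightarrow> int. True}"
    using assms by (rule lattice_points)
  have "(0 :: nat \<Rightarrow> int) = (\<lambda>i. \<Sum>j<n. 0 * b j i)" by (simp add: fun_eq_iff)
  then show ?thesis unfolding L by (intro CollectI exI[of _ "\<lambda>j. 0"]) simp
qed

lemma lattice_add_mem:
  assumes "is_lattice n L" "X \<in> L" "Y \<in> L"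
  shows "X + Y \<in> L"
  using lattice_diff_mem[OF assms(1) assms(2) lattice_diff_mem[OF assms(1) lattice_zero_mem[OF assms(1)] assms(3)]]
  by simp

lemma latA_is_lattice: "L \<in> latA n t l \<Longrightarrow> is_lattice n L"
  unfolding latA_def by blast

lemma packing_translates_eq:
  assumes "L \<in> latA n t l" "X \<in> L" "Y \<in> L" "a \<in> errS n t l" "b \<in> errS n t l" "X + a = Y + b"
  shows "X = Y"
proof (rule ccontr)
  assume "X \<noteq> Y"
  with assms(1-3) have "translate X (errS n t l) \<inter> translate Y (errS n t l) = {}"
    unfolding latA_def by blast
  moreover have "X + a \<in> translate X (errS n t l)" "Y + b \<in> translate Y (errS n t l)"
    using assms(4,5) unfolding translate_def plus_fun_def by blast+
  ultimately show False using assms(6) by auto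
qed

lemma positive_part_mem_errS:
  assumes "X \<in> zvec n" "\<forall>i<n. X i \<le> int l" "card {i. i < n \<and> 0 < X i} \<le> t"
  shows "(\<lambda>i. max (X i) 0) \<in> errS n t l"
proof -
  have "{i. i < n \<and> max (X i) 0 \<noteq> 0} = {i. i < n \<and> 0 < X i}" by auto
  with assms show ?thesis
    unfolding errS_def zvec_def hamming_weight_def by auto
qed

lemma packing_bounded_lattice_point_eq_0:
  assumes "L \<in> latA n t l" "X \<in> L" "\<forall>i<n. \<bar>X i\<bar> \<le> int l"
    and "card {i. i < n \<and> 0 < X i} \<le> t" "card {i. i < n \<and> X i < 0} \<le> t"
  shows "X = 0"
proof -
  have lat: "is_lattice n L" using assms(1) by (rule latA_is_lattice)
  have X: "X \<in> zvec n" and minus_X: "- X \<in> zvec n"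
    using lattice_subset_zvec[OF lat] assms(2) unfolding zvec_def by auto
  have pos: "(\<lambda>i. max (X i) 0) \<in> errS n t l"
    using positive_part_mem_errS[OF X] assms(3,4) by (simp add: abs_le_iff)
  have neg: "(\<lambda>i. max (- X i) 0) \<in> errS n t l"
    using positive_part_mem_errS[OF minus_X] assms(3,5) by (simp add: abs_le_iff)
  have "X + (\<lambda>i. max (- X i) 0) = 0 + (\<lambda>i. max (X i) 0)" by (auto simp: fun_eq_iff)
  then show "X = 0"
    by (rule packing_translates_eq[OF assms(1,2) lattice_zero_mem[OF lat] neg pos])
qed

lemma card_le_minus_2:
  assumes "i1 < n" "i2 < n" "i1 \<noteq> i2" "\<not> P i1" "\<not> P i2"
  shows "card {i. i < n \<and> P i} \<le> n - 2"
proof -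
  have "{i. i < n \<and> P i} \<subseteq> {..<n} - {i1, i2}" using assms by auto
  then have "card {i. i < n \<and> P i} \<le> card ({..<n} - {i1, i2})" by (intro card_mono) auto
  also have "\<dots> = n - 2" using assms(1-3) by (subst card_Diff_subset) auto
  finally show ?thesis .
qed

lemma ternary_lattice_point_eq_0:
  assumes "L \<in> latA n (n - 2) 1" "X \<in> L" "\<forall>i<n. \<bar>X i\<bar> \<le> 1"
    and "i1 < n" "i2 < n" "i1 \<noteq> i2" "X i1 \<le> 0" "X i2 \<le> 0"
    and "j1 < n" "j2 < n" "j1 \<noteq> j2" "0 \<le> X j1" "0 \<le> X j2"
  shows "X = 0"
proof (rule packing_bounded_lattice_point_eq_0[OF assms(1,2)])
  show "card {i. i < n \<and> 0 < X i} \<le> n - 2"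
    using assms(4-8) by (intro card_le_minus_2) auto
  show "card {i. i < n \<and> X i < 0} \<le> n - 2"
    using assms(9-13) by (intro card_le_minus_2) auto
qed (use assms(3) in simp)

lemma index_avoiding:
  assumes "finite A" "card A < n"
  obtains j where "j < n" "j \<notin> A"
proof (rule ccontr)
  assume "\<not> thesis"
  with that have "{..<n} \<subseteq> A" by blast
  then have "card {..<n} \<le> card A" by (rule card_mono[OF assms(1)])
  with assms(2) show False by simp
qed

lemma two_indices_avoiding:
  assumes "finite A" "card A + 2 \<le> n"
  obtains j1 j2 where "j1 < n" "j2 < n" "j1 \<noteq> j2" "j1 \<notin> A" "j2 \<notin> A"
proof -
  have "card A < n" using assms(2) by simp
  with assms(1) obtain j1 where j1: "j1 < n" "j1 \<notin> A" by (rule index_avoiding)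
  have "card (insert j1 A) < n" using assms j1(2) by simp
  with assms(1) obtain j2 where "j2 < n" "j2 \<notin> insert j1 A" by (rule index_avoiding[OF finite_insert[THEN iffD2]])
  with j1 show ?thesis using that by blast
qed

lemma errS_outside:
  "e \<in> errS n t l \<Longrightarrow> n \<le> i \<Longrightarrow> e i = 0"
  unfolding errS_def zvec_def by blast

lemma errS_values:
  assumes "e \<in> errS n t 1"
  shows "e i \<in> {0, 1}"
proof (cases "i < n")
  case True
  with assms have "0 \<le> e i" "e i \<le> 1" unfolding errS_def by auto
  then show ?thesis by auto
qed (use errS_outside[OF assms] in simp)

lemma errS_zero_avoiding:
  assumes "e \<in> errS n (n - 2) 1" "2 \<le> n"
  obtains r where "r < n" "r \<noteq> k" "e r = 0"
proof (rule ccontr)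
  assume "\<not> thesis"
  with that have "{..<n} - {k} \<subseteq> {i. i < n \<and> e i \<noteq> 0}" by blast
  then have "card ({..<n} - {k}) \<le> card {i. i < n \<and> e i \<noteq> 0}" by (intro card_mono) auto
  also have "\<dots> \<le> n - 2" using assms(1) unfolding errS_def hamming_weight_def by auto
  finally show False using assms(2) by (simp add: card_Diff_singleton_if split: if_splits)
qed

definition ones :: "nat \<Rightarrow> nat \<Rightarrow> int" where
  "ones n = (\<lambda>i. if i < n then 1 else 0)"

definition unit_vec :: "nat \<Rightarrow> nat \<Rightarrow> int" where
  "unit_vec k = (\<lambda>i. if i = k then 1 else 0)"

lemma ones_mem_zvec: "ones n \<in> zvec n"
  by (simp add: zvec_def ones_def)

lemma diff_unit_vec_mem_zvec: "X \<in> zvec n \<Longrightarrow> k < n \<Longrightarrow> X - c * unit_vec k \<in> zvec n"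
  by (simp add: zvec_def unit_vec_def)

lemma errS_eq_0_or_unit_vec:
  assumes "e \<in> errS n t 1" "\<forall>i<n. \<forall>j<n. e i = 1 \<longrightarrow> e j = 1 \<longrightarrow> i = j"
  shows "e = 0 \<or> (\<exists>i<n. e = unit_vec i)"
proof (cases "\<exists>i<n. e i = 1")
  case True
  then obtain i where i: "i < n" "e i = 1" by blast
  have "e m = unit_vec i m" for m
    using errS_values[OF assms(1), of m] errS_outside[OF assms(1), of m] assms(2) i
    by (cases "m < n") (auto simp: unit_vec_def)
  then show ?thesis using i(1) by blast
next
  case False
  have "e m = 0" for m
    using errS_values[OF assms(1), of m] errS_outside[OF assms(1), of m] False
    by (cases "m < n") auto
  then show ?thesis by (simp add: fun_eq_iff)
qed

lemma perfect_cover: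
  assumes "perfect n t l L" "v \<in> zvec n"
  obtains e where "e \<in> errS n t l" "v - e \<in> L"
proof -
  from assms obtain X e where "X \<in> L" "e \<in> errS n t l" "v = (\<lambda>i. X i + e i)"
    unfolding perfect_def translate_def by blast
  moreover from this have "v - e = X" by (simp add: fun_eq_iff)
  ultimately show ?thesis using that by simp
qed

lemma unit_vec_not_mem_lattice:
  assumes "L \<in> latA n (n - 2) 1" "3 \<le> n" "k < n"
  shows "unit_vec k \<notin> L"
proof
  assume mem: "unit_vec k \<in> L"
  obtain j1 j2 where j: "j1 < n" "j2 < n" "j1 \<noteq> j2" "j1 \<notin> {k}" "j2 \<notin> {k}"
    by (rule two_indices_avoiding[of "{k}" n]) (use assms(2) in auto)
  have "unit_vec k = 0"
  proof (rule ternary_lattice_point_eq_0[OF assms(1) mem, of j1 j2 j1 j2])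
    show "\<forall>i<n. \<bar>unit_vec k i\<bar> \<le> 1" by (simp add: unit_vec_def)
  qed (use j in \<open>simp_all add: unit_vec_def\<close>)
  then have "unit_vec k k = 0" by simp
  then show False by (simp add: unit_vec_def)
qed

lemma unit_vec_diff_not_mem_lattice:
  assumes "L \<in> latA n (n - 2) 1" "3 \<le> n" "i < n" "k < n" "i \<noteq> k"
  shows "unit_vec i - unit_vec k \<notin> L"
proof
  assume mem: "unit_vec i - unit_vec k \<in> L"
  obtain j where j: "j < n" "j \<notin> {i, k}"
    by (rule index_avoiding[of "{i, k}" n]) (use assms(2) in \<open>auto simp: card_insert_if\<close>)
  have "unit_vec i - unit_vec k = 0"
  proof (rule ternary_lattice_point_eq_0[OF assms(1) mem, of k j i j])
    show "\<forall>m<n. \<bar>(unit_vec i - unit_vec k) m\<bar> \<le> 1" by (simp add: unit_vec_def)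
  qed (use j assms(3-5) in \<open>simp_all add: unit_vec_def\<close>)
  then have "(unit_vec i - unit_vec k) i = 0" by simp
  then show False using assms(5) by (simp add: unit_vec_def)
qed

context
  fixes n :: nat and L :: "(nat \<Rightarrow> int) set"
  assumes packing: "L \<in> latA n (n - 2) 1"
    and perfect: "perfect n (n - 2) 1 L"
    and n_ge_4: "4 \<le> n"
begin

lemma ones_or_ones_minus_unit_vec_or_twice_mem_lattice:
  "ones n \<in> L \<or> (\<exists>i<n. ones n - unit_vec i \<in> L)"
proof -
  obtain e where e: "e \<in> errS n (n - 2) 1" and Z: "ones n - e \<in> L"
    using perfect_cover[OF perfect ones_mem_zvec] .
  show ?thesis
  proof (cases "\<exists>i<n. \<exists>j<n. i \<noteq> j \<and> e i = 1 \<and> e j = 1")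
    case True
    then obtain i j where ij: "i < n" "j < n" "i \<noteq> j" "e i = 1" "e j = 1" by blast
    obtain r where r: "r < n" "e r = 0" using errS_zero_avoiding[OF e] n_ge_4 by auto
    have "ones n - e = 0"
    proof (rule ternary_lattice_point_eq_0[OF packing Z, of i j i j])
      show "\<forall>m<n. \<bar>(ones n - e) m\<bar> \<le> 1"
      proof (intro allI impI)
        fix m assume "m < n"
        then show "\<bar>(ones n - e) m\<bar> \<le> 1" using errS_values[OF e, of m] by (auto simp: ones_def)
      qed
    qed (use ij in \<open>simp_all add: ones_def\<close>)
    then have "(ones n - e) r = 0" by simp
    then show ?thesis using r by (simp add: ones_def)
  next
    case False
    then have "e = 0 \<or> (\<exists>i<n. e = unit_vec i)" by (intro errS_eq_0_or_unit_vec[OF e]) blast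
    then show ?thesis using Z by auto
  qed
qed

lemma ones_minus_unit_vec_or_twice_mem_lattice:
  assumes "k < n"
  shows "ones n - unit_vec k \<in> L \<or> ones n - 2 * unit_vec k \<in> L"
proof -
  have "ones n - 1 * unit_vec k \<in> zvec n" by (rule diff_unit_vec_mem_zvec[OF ones_mem_zvec assms])
  then obtain e where e: "e \<in> errS n (n - 2) 1" and Z: "ones n - unit_vec k - e \<in> L"
    using perfect_cover[OF perfect] by auto
  show ?thesis
  proof (cases "\<exists>m<n. m \<noteq> k \<and> e m = 1")
    case True
    then obtain m where m: "m < n" "m \<noteq> k" "e m = 1" by blast
    obtain r where r: "r < n" "r \<noteq> k" "e r = 0" using errS_zero_avoiding[OF e] n_ge_4 by auto
    obtain j1 j2 where j: "j1 < n" "j2 < n" "j1 \<noteq> j2" "j1 \<notin> {k}" "j2 \<notin> {k}"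
      by (rule two_indices_avoiding[of "{k}" n]) (use n_ge_4 in auto)
    have "ones n - unit_vec k - e = 0"
    proof (rule ternary_lattice_point_eq_0[OF packing Z, of m k j1 j2])
      show "\<forall>i<n. \<bar>(ones n - unit_vec k - e) i\<bar> \<le> 1"
      proof (intro allI impI)
        fix i assume "i < n"
        then show "\<bar>(ones n - unit_vec k - e) i\<bar> \<le> 1"
          using errS_values[OF e, of i] by (auto simp: ones_def unit_vec_def)
      qed
    qed (use assms m j errS_values[OF e, of k] errS_values[OF e, of j1] errS_values[OF e, of j2]
         in \<open>auto simp: ones_def unit_vec_def\<close>)
    then have "(ones n - unit_vec k - e) r = 0" by simp
    then show ?thesis using r by (simp add: ones_def unit_vec_def)
  next
    case False
    then have "e = 0 \<or> e = unit_vec k"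
      using errS_eq_0_or_unit_vec[OF e] by (metis unit_vec_def)
    moreover have "ones n - unit_vec k - unit_vec k = ones n - 2 * unit_vec k"
      by (simp add: fun_eq_iff)
    ultimately show ?thesis using Z by auto
  qed
qed

lemma ones_not_mem_lattice: "ones n \<notin> L"
proof
  assume ones: "ones n \<in> L"
  have lat: "is_lattice n L" using packing by (rule latA_is_lattice)
  have twice: "ones n - 2 * unit_vec k \<in> L" if "k < n" for k
  proof -
    have "ones n - unit_vec k \<notin> L"
    proof
      assume "ones n - unit_vec k \<in> L"
      then have "ones n - (ones n - unit_vec k) \<in> L" by (rule lattice_diff_mem[OF lat ones])
      then show False using unit_vec_not_mem_lattice[OF packing _ that] n_ge_4 by simp
    qed
    then show ?thesis using ones_minus_unit_vec_or_twice_mem_lattice[OF that] by blast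
  qed
  let ?V = "(ones n - 2 * unit_vec 0) + (ones n - 2 * unit_vec 1) - ones n"
  have V: "?V \<in> L" using n_ge_4 by (intro lattice_diff_mem[OF lat] lattice_add_mem[OF lat] twice ones) auto
  have "?V = 0"
  proof (rule ternary_lattice_point_eq_0[OF packing V, of 0 1 2 3])
    show "\<forall>i<n. \<bar>?V i\<bar> \<le> 1" by (simp add: ones_def unit_vec_def)
  qed (use n_ge_4 in \<open>simp_all add: ones_def unit_vec_def\<close>)
  then have "?V 2 = 0" by simp
  then show False using n_ge_4 by (simp add: ones_def unit_vec_def)
qed

lemma ones_minus_unit_vec_not_mem_lattice:
  assumes "i < n"
  shows "ones n - unit_vec i \<notin> L"
proof
  assume X: "ones n - unit_vec i \<in> L"
  have lat: "is_lattice n L" using packing by (rule latA_is_lattice)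
  obtain e where e: "e \<in> errS n (n - 2) 1" and X2: "ones n - 2 * unit_vec i - e \<in> L"
    using perfect_cover[OF perfect diff_unit_vec_mem_zvec[OF ones_mem_zvec assms]] .
  obtain k where k: "k < n" "k \<noteq> i" "e k = 0" using errS_zero_avoiding[OF e] n_ge_4 by auto
  have "ones n - unit_vec k \<notin> L"
  proof
    assume "ones n - unit_vec k \<in> L"
    then have "(ones n - unit_vec k) - (ones n - unit_vec i) \<in> L" by (rule lattice_diff_mem[OF lat _ X])
    then show False using unit_vec_diff_not_mem_lattice[OF packing _ assms k(1) k(2)[symmetric]] n_ge_4 by simp
  qed
  then have Y: "ones n - 2 * unit_vec k \<in> L" using ones_minus_unit_vec_or_twice_mem_lattice[OF k(1)] by blast
  let ?V = "(ones n - 2 * unit_vec i - e) + (ones n - 2 * unit_vec k) - (ones n - unit_vec i)"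
  \<comment> \<open>its entries are \<open>-e i\<close> at \<open>i\<close>, \<open>-1\<close> at \<open>k\<close> and \<open>1 - e m\<close> elsewhere\<close>
  have V: "?V \<in> L" by (intro lattice_diff_mem[OF lat] lattice_add_mem[OF lat] X X2 Y)
  obtain j1 j2 where j: "j1 < n" "j2 < n" "j1 \<noteq> j2" "j1 \<notin> {i, k}" "j2 \<notin> {i, k}"
    by (rule two_indices_avoiding[of "{i, k}" n]) (use n_ge_4 in \<open>auto simp: card_insert_if\<close>)
  have "?V = 0"
  proof (rule ternary_lattice_point_eq_0[OF packing V, of i k j1 j2])
    show "\<forall>m<n. \<bar>?V m\<bar> \<le> 1"
    proof (intro allI impI)
      fix m assume "m < n"
      then show "\<bar>?V m\<bar> \<le> 1" using errS_values[OF e, of m] k by (auto simp: ones_def unit_vec_def)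
    qed
  qed (use assms k j errS_values[OF e, of i] errS_values[OF e, of j1] errS_values[OF e, of j2]
       in \<open>auto simp: ones_def unit_vec_def\<close>)
  then have "?V k = 0" by simp
  then show False using k by (simp add: ones_def unit_vec_def)
qed

end

theorem mainTheorem6:
  fixes n :: nat
  assumes "n \<ge> 4"
  shows "\<not> (\<exists>L \<in> latA n (n - 2) 1. perfect n (n - 2) 1 L)"
proof
  assume "\<exists>L \<in> latA n (n - 2) 1. perfect n (n - 2) 1 L"
  then obtain L where "L \<in> latA n (n - 2) 1" "perfect n (n - 2) 1 L" by blast
  with assms show False
    using ones_or_ones_minus_unit_vec_or_twice_mem_lattice ones_not_mem_lattice
      ones_minus_unit_vec_not_mem_lattice by blast
qed

end
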